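(* Let $m,n$ be integers with $0\le m<n$, let $M,N\subseteq\mathbb Z$ be finite nonempty sets, and let $U=b^m a^M$, $V=b^n a^N$ and $S=U\cup V\subseteq BS^{+}(1,3)$. If $|S|\geq 4$, then $|S^2|\geq \tfrac{7}{2}|S|-6$.
   Context: $BS(1,3)=\langle a,b\mid ab=ba^3\rangle$; $BS^{+}(1,3)=\{b^m a^x: m\in\mathbb{Z}_{\ge 0},\ x\in\mathbb{Z}\}$, with $(b^m a^x)(b^n a^y)=b^{m+n}a^{y+3^n x}$. For $A\subseteq\mathbb Z$, $b^m a^A=\{b^m a^x: x\in A\}$. $S^2=\{st: s,t\in S\}$. *)

theory Defs
  imports Complex_Main
begin

text \<open>Elements b^m a^x of the monoid BS^+(1,3) are represented as pairs (m, x)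
 with m a natural number and x an integer.\<close>
type_synonym bsp = "nat \<times> int"

definition bs_mult :: "bsp \<Rightarrow> bsp \<Rightarrow> bsp" where
  "bs_mult s t = (fst s + fst t, snd t + 3 ^ (fst t) * snd s)"

definition bs_layer :: "nat \<Rightarrow> int set \<Rightarrow> bsp set" where
  "bs_layer m A = {(m, x) | x. x \<in> A}"

definition bs_square :: "bsp set \<Rightarrow> bsp set" where
  "bs_square S = {bs_mult s t | s t. s \<in> S \<and> t \<in> S}"

end

theory Submission
  imports Defs "HOL-Library.Set_Algebras"
begin

text \<open>
  The square of S is the union of three layers, b^{2m} a^{M + 3^m M},
  b^{m+n} a^{(N + 3^n M) \<union> (M + 3^m N)} and b^{2n} a^{N + 3^n N}, so everything reduces to
  sumset estimates in \<int>. Besides |A + B| \<ge> |A| + |B| - 1, the key estimate is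
  |A + q\<cdot>A| \<ge> 3|A| - 2 for q \<ge> 2: if A meets two residue classes mod q, split A
  along one class, the two pieces giving disjoint sumsets; otherwise A = c + q\<cdot>A', and
  passing to A' preserves all sizes and shrinks the diameter. For m > 0 these estimates
  already give |S^2| \<ge> 4|S| - 5. For m = 0 (q = 3^n) the middle layer is
  (N + qM) \<union> (M + N). Either N meets two classes mod q; or N lies in one class c and
  some x \<in> M is not divisible by q, so that N + qM \<subseteq> c + q\<int> misses (M \ q\<int>) + N;
  or M \<subseteq> q\<int>, N \<subseteq> c + q\<int> and both contract. This proves 7|S| \<le> 2|S^2| + 12 by
  induction on diam M + diam N.
\<close>

lemma card_elt_set_plus: "card ((c::'a::cancel_semigroup_add) +o A) = card A"
  unfolding elt_set_plus_def
  by (rule bij_betw_same_card[of "(+) c", symmetric]) (auto simp: bij_betw_def inj_on_def)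

lemma card_elt_set_times: "(q::'a::idom) \<noteq> 0 \<Longrightarrow> card (q *o A) = card A"
  unfolding elt_set_times_def
  by (rule bij_betw_same_card[of "(*) q", symmetric]) (auto simp: bij_betw_def inj_on_def)

lemma finite_elt_set_times: "finite A \<Longrightarrow> finite (q *o A)"
  by (simp add: elt_set_times_def setcompr_eq_image)

lemma elt_set_times_eq_empty_iff [simp]: "q *o A = {} \<longleftrightarrow> A = {}"
  by (auto simp: elt_set_times_def)

lemma elt_set_plus_Un: "c +o (A \<union> B) = c +o A \<union> c +o B"
  unfolding elt_set_plus_def by auto

lemma elt_set_times_Un: "q *o (A \<union> B) = q *o A \<union> q *o B"
  unfolding elt_set_times_def by auto

lemma card_set_plus_ge:
  fixes A B :: "'a::linordered_ab_group_add set"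
  assumes "finite A" "A \<noteq> {}" "finite B" "B \<noteq> {}"
  shows "card A + card B \<le> card (A + B) + 1"
proof -
  let ?X = "A + {Max B}" and ?Y = "B + {Min A}"
  have "?X \<union> ?Y \<subseteq> A + B"
    unfolding add.commute[of B] using assms by (intro Un_least set_plus_mono2) auto
  then have "card (?X \<union> ?Y) \<le> card (A + B)"
    using assms by (intro card_mono finite_set_plus)
  moreover have "?X \<inter> ?Y \<subseteq> {Min A + Max B}"
  proof
    fix z assume "z \<in> ?X \<inter> ?Y"
    then obtain a b where "a \<in> A" "b \<in> B" "z = a + Max B" "z = b + Min A"
      by (auto simp: set_plus_def)
    moreover have "Min A \<le> a" "b \<le> Max B"
      using assms \<open>a \<in> A\<close> \<open>b \<in> B\<close> by auto
    ultimately show "z \<in> {Min A + Max B}"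
      by (metis add_mono add.commute antisym add_le_cancel_left singletonI)
  qed
  then have "card (?X \<inter> ?Y) \<le> 1"
    using card_mono[of "{Min A + Max B}"] by simp
  moreover have "card ?X + card ?Y = card (?X \<union> ?Y) + card (?X \<inter> ?Y)"
    using assms by (intro card_Un_Int) (auto intro: finite_set_plus)
  ultimately show ?thesis
    by (simp add: card_plus_sing)
qed

lemma set_plus_dilation_mod:
  fixes q :: int
  assumes "z \<in> A + q *o X"
  obtains a where "a \<in> A" "z mod q = a mod q"
  using assms by (auto simp: set_plus_def elt_set_times_def)

lemma card_set_plus_dilation_two_classes:
  fixes q :: int
  assumes "q \<noteq> 0" "finite A" "finite X" "X \<noteq> {}" "a \<in> A" "b \<in> A" "a mod q \<noteq> b mod q"
  shows "card A + 2 * card X \<le> card (A + q *o X) + 2"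
proof -
  define A1 where "A1 = {x \<in> A. x mod q = a mod q}"
  define A2 where "A2 = A - A1"
  have A1: "finite A1" "A1 \<noteq> {}" and A2: "finite A2" "A2 \<noteq> {}"
    using assms by (auto simp: A1_def A2_def)
  have "card A1 + card A2 = card A"
    using assms(2) by (simp add: A2_def A1_def card_Diff_subset card_mono)
  moreover have "card Ai + card X \<le> card (Ai + q *o X) + 1" if "finite Ai" "Ai \<noteq> {}" for Ai
    using card_set_plus_ge[OF that finite_elt_set_times[OF assms(3)], of q] assms(1,4)
    by (simp add: card_elt_set_times)
  note this[OF A1] this[OF A2]
  moreover have "(A1 + q *o X) \<inter> (A2 + q *o X) = {}"
    by (auto simp: A1_def A2_def elim!: set_plus_dilation_mod)
  then have "card (A1 + q *o X) + card (A2 + q *o X) = card ((A1 + q *o X) \<union> (A2 + q *o X))"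
    using A1 A2 assms(3) by (simp add: card_Un_disjoint finite_set_plus finite_elt_set_times)
  moreover have "(A1 + q *o X) \<union> (A2 + q *o X) \<subseteq> A + q *o X"
    by (intro Un_least set_plus_mono2) (auto simp: A1_def A2_def)
  then have "card ((A1 + q *o X) \<union> (A2 + q *o X)) \<le> card (A + q *o X)"
    using assms(2,3) by (intro card_mono finite_set_plus finite_elt_set_times)
  ultimately show ?thesis
    by linarith
qed

definition diam :: "int set \<Rightarrow> int" where
  "diam A = Max A - Min A"

lemma diam_nonneg: "finite A \<Longrightarrow> A \<noteq> {} \<Longrightarrow> 0 \<le> diam A"
  unfolding diam_def by simp

lemma diam_pos:
  assumes "finite A" "card A \<ge> 2"
  shows "diam A > 0"
proof -
  obtain x y where "x \<in> A" "y \<in> A" "x < y"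
    using assms by (metis card_le_Suc0_iff_eq linorder_neqE not_less_eq_eq numeral_2_eq_2)
  then show ?thesis
    using assms(1) unfolding diam_def by (meson Max_ge Min_le less_le_trans le_less_trans diff_gt_0_iff_gt)
qed

lemma congruent_set_contraction:
  fixes q c :: int
  assumes "q > 0" "finite A" "A \<noteq> {}" "\<forall>x\<in>A. x mod q = c mod q"
  obtains A' where "finite A'" "A' \<noteq> {}" "A = c +o q *o A'" "diam A = q * diam A'"
proof
  let ?f = "\<lambda>y. c + q * y"
  define A' where "A' = (\<lambda>x. (x - c) div q) ` A"
  show "finite A'" "A' \<noteq> {}"
    using assms by (simp_all add: A'_def)
  have "?f ` A' = A"
    using assms(4) by (force simp: A'_def image_image mod_eq_dvd_iff intro: image_cong[THEN trans, OF refl])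
  then show "A = c +o q *o A'"
    by (auto simp: elt_set_plus_def elt_set_times_def)
  have "mono ?f"
    using assms(1) by (auto intro: monoI)
  then have "Max A = ?f (Max A')" "Min A = ?f (Min A')"
    unfolding \<open>?f ` A' = A\<close>[symmetric]
    using mono_Max_commute mono_Min_commute \<open>finite A'\<close> \<open>A' \<noteq> {}\<close> by metis+
  then show "diam A = q * diam A'"
    by (simp add: diam_def algebra_simps)
qed

lemma set_plus_affine:
  fixes c d q :: "'a::comm_semiring_1"
  shows "(c +o q *o A) + (d +o q *o B) = (c + d) +o q *o (A + B)"
  by (simp add: set_plus_rearrange set_times_plus_distrib2)

lemma elt_set_times_affine:
  fixes c p q :: "'a::comm_semiring_1"
  shows "p *o (c +o q *o A) = (p * c) +o q *o (p *o A)"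
  by (simp add: set_times_plus_distrib set_times_rearrange2 mult.commute)

lemma card_set_plus_dilation_ge:
  fixes q :: int
  assumes "q \<ge> 2" "finite A" "A \<noteq> {}"
  shows "3 * card A \<le> card (A + q *o A) + 2"
  using assms(2,3)
proof (induction A rule: measure_induct_rule[where f = "\<lambda>A. nat (diam A)"])
  case (less A)
  then obtain c where "c \<in> A"
    by blast
  show ?case
  proof (cases "\<forall>x\<in>A. x mod q = c mod q")
    case False
    then obtain b where "b \<in> A" "b mod q \<noteq> c mod q"
      by blast
    then show ?thesis
      using card_set_plus_dilation_two_classes[OF _ less.prems(1) less.prems \<open>b \<in> A\<close> \<open>c \<in> A\<close>] assms(1)
      by simp
  next
    case True
    obtain A' where A': "finite A'" "A' \<noteq> {}" "A = c +o q *o A'" "diam A = q * diam A'"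
      using congruent_set_contraction[OF _ less.prems True] assms(1) by auto
    show ?thesis
    proof (cases "card A \<ge> 2")
      case True
      then have "0 < diam A" "diam A' < diam A"
        using diam_pos[OF less.prems(1)] A'(4) assms(1) by (simp_all add: zero_less_mult_iff)
      then have "3 * card A' \<le> card (A' + q *o A') + 2"
        using less.IH[of A'] A'(1,2) by simp
      moreover have "A + q *o A = (c + q * c) +o q *o (A' + q *o A')"
        unfolding A'(3) elt_set_times_affine set_plus_affine ..
      ultimately show ?thesis
        using A'(3) assms(1) by (simp add: card_elt_set_plus card_elt_set_times)
    next
      case False
      then have "card A = 1"
        using less.prems card_gt_0_iff[of A] by linarith
      moreover have "A + q *o A \<noteq> {}"
        using less.prems by (auto simp: set_plus_def elt_set_times_def)
      then have "card (A + q *o A) \<ge> 1"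
        using less.prems by (simp add: Suc_le_eq card_gt_0_iff finite_set_plus finite_elt_set_times)
      ultimately show ?thesis
        by simp
    qed
  qed
qed

text \<open>The size of S^2 for S = a^M \<union> b^n a^N, with q = 3^n: one summand per layer.\<close>

definition square_size :: "int \<Rightarrow> int set \<Rightarrow> int set \<Rightarrow> nat" where
  "square_size q M N = card (M + M) + card ((N + q *o M) \<union> (M + N)) + card (N + q *o N)"

lemma square_size_contract:
  fixes q c :: int
  assumes "q \<noteq> 0"
  shows "square_size q (q *o M) (c +o q *o N) = square_size q M N"
proof -
  have "q *o M = 0 +o q *o M"
    by simp
  then have "q *o M + q *o M = 0 +o q *o (M + M)"
    and "(c +o q *o N) + q *o (q *o M) = c +o q *o (N + q *o M)"
    and "q *o M + (c +o q *o N) = c +o q *o (M + N)"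
    and "(c +o q *o N) + q *o (c +o q *o N) = (c + q * c) +o q *o (N + q *o N)"
    by (metis set_plus_affine elt_set_times_affine add_0 mult_zero_right add_0_right)+
  then show ?thesis
    unfolding square_size_def using assms
    by (simp add: card_elt_set_plus card_elt_set_times flip: elt_set_times_Un elt_set_plus_Un)
qed

lemma card_middle_layer_one_class:
  fixes q c :: int
  assumes "finite M" "M \<noteq> {}" "finite N" "N \<noteq> {}" "q \<noteq> 0"
    and "\<forall>y\<in>N. y mod q = c mod q"
    and "M1 \<subseteq> M" "M1 \<noteq> {}" "\<forall>x\<in>M1. \<not> q dvd x"
  shows "card M + 2 * card N + card M1 \<le> card ((N + q *o M) \<union> (M + N)) + 2"
proof -
  have "finite M1"
    using assms(1,7) by (rule finite_subset[rotated])
  then have fin: "finite M1" "finite (N + q *o M)" "finite (M1 + N)"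
    using assms(1,3) by (simp_all add: finite_set_plus finite_elt_set_times)
  have "(N + q *o M) \<inter> (M1 + N) = {}"
  proof (intro equals0I)
    fix z assume z: "z \<in> (N + q *o M) \<inter> (M1 + N)"
    then obtain x y where "x \<in> M1" "y \<in> N" "z = x + y"
      by (auto elim: set_plus_elim)
    moreover obtain y' where "y' \<in> N" "z mod q = y' mod q"
      using z by (auto elim: set_plus_dilation_mod)
    ultimately have "(x + y) mod q = y mod q"
      using assms(6) by simp
    then show False
      using \<open>x \<in> M1\<close> assms(9) by (simp add: mod_eq_dvd_iff)
  qed
  then have "card (N + q *o M) + card (M1 + N) = card ((N + q *o M) \<union> (M1 + N))"
    using fin by (simp add: card_Un_disjoint)
  also have "\<dots> \<le> card ((N + q *o M) \<union> (M + N))"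
    using assms(1,3,7) by (intro card_mono Un_mono set_plus_mono2) (auto intro: finite_set_plus finite_elt_set_times)
  finally show ?thesis
    using card_set_plus_ge[OF assms(3,4) finite_elt_set_times[OF assms(1)], of q]
      card_set_plus_ge[OF fin(1) assms(8,3,4)] assms(2,5)
    by (simp add: card_elt_set_times)
qed

lemma card_set_plus_divisible_split:
  fixes q :: int
  assumes "finite M" "M0 \<subseteq> M" "M0 \<noteq> {}" "\<forall>x\<in>M0. q dvd x" "M1 \<subseteq> M" "M1 \<noteq> {}" "\<forall>x\<in>M1. \<not> q dvd x"
  shows "3 * card M0 + card M1 \<le> card (M + M) + 2"
proof -
  have fin: "finite M0" "finite M1"
    using assms(1,2,5) by (simp_all add: finite_subset)
  have "(M0 + M0) \<inter> (M0 + M1) = {}"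
    using assms(4,7) by (auto elim!: set_plus_elim) (metis dvd_add_right_iff)
  then have "card (M0 + M0) + card (M0 + M1) = card ((M0 + M0) \<union> (M0 + M1))"
    using fin by (simp add: card_Un_disjoint finite_set_plus)
  also have "\<dots> \<le> card (M + M)"
    using assms by (intro card_mono Un_least set_plus_mono2) (auto intro: finite_set_plus)
  finally show ?thesis
    using card_set_plus_ge[OF fin(1) assms(3) fin(1) assms(3)] card_set_plus_ge[OF fin(1) assms(3) fin(2) assms(6)]
    by linarith
qed

lemma square_size_layer_bounds:
  fixes q :: int
  assumes "q \<ge> 2" "finite M" "M \<noteq> {}" "finite N" "N \<noteq> {}"
  shows "2 * card M \<le> card (M + M) + 1"
    and "card M + card N \<le> card (N + q *o M) + 1"
    and "card (N + q *o M) \<le> card ((N + q *o M) \<union> (M + N))"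
    and "3 * card N \<le> card (N + q *o N) + 2"
proof -
  show "2 * card M \<le> card (M + M) + 1"
    using card_set_plus_ge[OF assms(2,3,2,3)] by simp
  show "card M + card N \<le> card (N + q *o M) + 1"
    using card_set_plus_ge[OF assms(4,5) finite_elt_set_times[OF assms(2)], of q] assms(1,3)
    by (simp add: card_elt_set_times)
  show "card (N + q *o M) \<le> card ((N + q *o M) \<union> (M + N))"
    using assms by (intro card_mono) (simp_all add: finite_set_plus finite_elt_set_times)
  show "3 * card N \<le> card (N + q *o N) + 2"
    using card_set_plus_dilation_ge[OF assms(1,4,5)] .
qed

lemma square_size_ge_two_classes:
  fixes q :: int
  assumes "q \<ge> 2" "finite M" "M \<noteq> {}" "finite N" "N \<noteq> {}"
    and "b \<in> N" "c \<in> N" "b mod q \<noteq> c mod q"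
  shows "7 * (card M + card N) \<le> 2 * square_size q M N + 12"
proof -
  have "card N + 2 * card M \<le> card (N + q *o M) + 2"
    using card_set_plus_dilation_two_classes[OF _ assms(4,2,3,6-8)] assms(1) by simp
  then show ?thesis
    using square_size_layer_bounds[OF assms(1-5)] unfolding square_size_def distrib_left by linarith
qed

lemma square_size_ge_one_class:
  fixes q c :: int
  assumes "q \<ge> 2" "finite M" "M \<noteq> {}" "finite N" "N \<noteq> {}"
    and "\<forall>y\<in>N. y mod q = c mod q" "x \<in> M" "\<not> q dvd x"
  shows "7 * (card M + card N) \<le> 2 * square_size q M N + 12"
proof -
  define M0 where "M0 = {x \<in> M. q dvd x}"
  define M1 where "M1 = {x \<in> M. \<not> q dvd x}"
  have M0: "M0 \<subseteq> M" "\<forall>x\<in>M0. q dvd x" and M1: "M1 \<subseteq> M" "M1 \<noteq> {}" "\<forall>x\<in>M1. \<not> q dvd x"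
    using assms(7,8) by (auto simp: M0_def M1_def)
  have "M = M0 \<union> M1" "M0 \<inter> M1 = {}"
    by (auto simp: M0_def M1_def)
  then have split: "card M0 + card M1 = card M"
    using assms(2) by (metis card_Un_disjoint finite_Un)
  have middle: "card M + 2 * card N + card M1 \<le> card ((N + q *o M) \<union> (M + N)) + 2"
    using card_middle_layer_one_class[OF assms(2-5) _ assms(6) M1] assms(1) by simp
  note bounds = square_size_layer_bounds[OF assms(1-5)]
  show ?thesis
  proof (cases "M0 = {}")
    case True
    then show ?thesis
      using split middle bounds unfolding square_size_def distrib_left by simp
  next
    case False
    then have "3 * card M0 + card M1 \<le> card (M + M) + 2"
      using card_set_plus_divisible_split[OF assms(2) M0(1) False M0(2) M1] by simp
    then show ?thesis
      using split middle bounds unfolding square_size_def distrib_left by linarith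
  qed
qed

lemma square_size_ge:
  fixes q :: int
  assumes "q \<ge> 2" "finite M" "M \<noteq> {}" "finite N" "N \<noteq> {}"
  shows "7 * (card M + card N) \<le> 2 * square_size q M N + 12"
  using assms(2-5)
proof (induction "nat (diam M) + nat (diam N)" arbitrary: M N rule: less_induct)
  case less
  obtain c where "c \<in> N"
    using less.prems by blast
  consider (N_splits) b where "b \<in> N" "b mod q \<noteq> c mod q"
    | (M_splits) x where "\<forall>y\<in>N. y mod q = c mod q" "x \<in> M" "\<not> q dvd x"
    | (contract) "\<forall>y\<in>N. y mod q = c mod q" "\<forall>x\<in>M. q dvd x"
    by blast
  then show ?case
  proof cases
    case N_splits
    then show ?thesis
      using square_size_ge_two_classes[OF assms(1) less.prems _ \<open>c \<in> N\<close>] by blast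
  next
    case M_splits
    then show ?thesis
      using square_size_ge_one_class[OF assms(1) less.prems] by blast
  next
    case contract
    show ?thesis
    proof (cases "card M + card N \<le> 2")
      case True
      then show ?thesis
        using square_size_layer_bounds[OF assms(1) less.prems]
        unfolding square_size_def distrib_left by linarith
    next
      case False
      obtain M' where M': "finite M'" "M' \<noteq> {}" "M = 0 +o q *o M'" "diam M = q * diam M'"
        using congruent_set_contraction[OF _ less.prems(1,2), of q 0] contract(2) assms(1)
        by (auto simp: dvd_eq_mod_eq_0)
      obtain N' where N': "finite N'" "N' \<noteq> {}" "N = c +o q *o N'" "diam N = q * diam N'"
        using congruent_set_contraction[OF _ less.prems(3,4) contract(1)] assms(1) by auto
      have nonneg: "0 \<le> diam M'" "0 \<le> diam N'"
        using M'(1,2) N'(1,2) by (simp_all add: diam_nonneg)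
      moreover have "0 < diam M \<or> 0 < diam N"
        using False diam_pos[OF less.prems(1)] diam_pos[OF less.prems(3)] by linarith
      ultimately have "diam M' \<le> diam M" "diam N' \<le> diam N" "diam M' < diam M \<or> diam N' < diam N"
        using M'(4) N'(4) assms(1)
        by (auto simp: mult_le_cancel_right1 mult_less_cancel_right1 zero_less_mult_iff)
      then have "nat (diam M') + nat (diam N') < nat (diam M) + nat (diam N)"
        using nonneg by linarith
      then have "7 * (card M' + card N') \<le> 2 * square_size q M' N' + 12"
        using less.hyps M'(1,2) N'(1,2) by blast
      moreover have "square_size q M N = square_size q M' N'"
        using square_size_contract[where c=c and M=M' and N=N'] M'(3) N'(3) assms(1) by simp
      ultimately show ?thesis
        using M'(3) N'(3) assms(1) by (simp add: card_elt_set_plus card_elt_set_times)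
    qed
  qed
qed

lemma bs_layer_eq_image: "bs_layer m A = Pair m ` A"
  unfolding bs_layer_def by auto

lemma card_bs_layer: "card (bs_layer m A) = card A"
  by (simp add: bs_layer_eq_image card_image inj_on_def)

lemma finite_bs_layer: "finite A \<Longrightarrow> finite (bs_layer m A)"
  by (simp add: bs_layer_eq_image)

lemma bs_layer_disjoint: "i \<noteq> j \<Longrightarrow> bs_layer i A \<inter> bs_layer j B = {}"
  by (auto simp: bs_layer_def)

lemma bs_mult_layers: "bs_mult (m, x) (n, y) = (m + n, y + 3 ^ n * x)"
  by (simp add: bs_mult_def)

lemma bs_square_two_layers:
  "bs_square (bs_layer m M \<union> bs_layer n N) =
     bs_layer (m + m) (M + 3 ^ m *o M) \<union> bs_layer (m + n) ((N + 3 ^ n *o M) \<union> (M + 3 ^ m *o N))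
       \<union> bs_layer (n + n) (N + 3 ^ n *o N)"
  (is "?lhs = ?rhs")
proof (intro equalityI subsetI)
  fix p assume "p \<in> ?lhs"
  then obtain s t where "s \<in> bs_layer m M \<union> bs_layer n N" "t \<in> bs_layer m M \<union> bs_layer n N" "p = bs_mult s t"
    unfolding bs_square_def by blast
  then show "p \<in> ?rhs"
    unfolding bs_layer_eq_image by (auto simp: bs_mult_layers add.commute[of n m])
next
  fix p assume "p \<in> ?rhs"
  have square: "(i + j, y + 3 ^ j * x) \<in> ?lhs"
    if "(i, x) \<in> bs_layer m M \<union> bs_layer n N" "(j, y) \<in> bs_layer m M \<union> bs_layer n N" for i j x y
    using that unfolding bs_square_def bs_mult_layers[symmetric] by blast
  from \<open>p \<in> ?rhs\<close> show "p \<in> ?lhs"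
    unfolding bs_layer_eq_image elt_set_times_def
    by (auto elim!: set_plus_elim intro: square[unfolded bs_layer_eq_image])
      (metis square[unfolded bs_layer_eq_image] add.commute UnI1 UnI2 imageI)
qed

lemma card_bs_square_two_layers:
  assumes "m < n" "finite M" "finite N"
  shows "card (bs_square (bs_layer m M \<union> bs_layer n N)) =
    card (M + 3 ^ m *o M) + card ((N + 3 ^ n *o M) \<union> (M + 3 ^ m *o N)) + card (N + 3 ^ n *o N)"
proof -
  have "finite (M + 3 ^ m *o M)" "finite ((N + 3 ^ n *o M) \<union> (M + 3 ^ m *o N))" "finite (N + 3 ^ n *o N)"
    using assms(2,3) by (simp_all add: finite_set_plus finite_elt_set_times)
  then show ?thesis
    unfolding bs_square_two_layers using assms(1)
    by (simp add: card_Un_disjoint Int_Un_distrib2 card_bs_layer finite_bs_layer bs_layer_disjoint)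
qed

theorem lemma2p1:
  fixes m n :: nat and M N :: "int set"
  assumes "m < n"
    and "finite M" and "M \<noteq> {}" and "finite N" and "N \<noteq> {}"
    and "card (bs_layer m M \<union> bs_layer n N) \<ge> 4"
  shows "real (card (bs_square (bs_layer m M \<union> bs_layer n N)))
           \<ge> 7 / 2 * real (card (bs_layer m M \<union> bs_layer n N)) - 6"
proof -
  have card_S: "card (bs_layer m M \<union> bs_layer n N) = card M + card N"
    using assms(1,2,4) by (simp add: card_Un_disjoint card_bs_layer finite_bs_layer bs_layer_disjoint)
  have "(3::int) ^ n \<ge> 3"
    using power_increasing[of 1 n "3::int"] assms(1) by simp
  have "7 * (card M + card N) \<le> 2 * card (bs_square (bs_layer m M \<union> bs_layer n N)) + 12"
  proof (cases "m = 0")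
    case True
    then have "card (bs_square (bs_layer m M \<union> bs_layer n N)) = square_size (3 ^ n) M N"
      using card_bs_square_two_layers[OF assms(1,2,4)] by (simp add: square_size_def)
    then show ?thesis
      using square_size_ge[of "3 ^ n" M N] \<open>3 ^ n \<ge> 3\<close> assms(2-5) by simp
  next
    case False
    then have "(3::int) ^ m \<ge> 3"
      using power_increasing[of 1 m "3::int"] by simp
    have "card (N + 3 ^ n *o M) \<le> card ((N + 3 ^ n *o M) \<union> (M + 3 ^ m *o N))"
      using assms(2,4) by (intro card_mono) (auto simp: finite_set_plus finite_elt_set_times)
    then show ?thesis
      using card_set_plus_dilation_ge[of "3 ^ m" M] card_set_plus_dilation_ge[of "3 ^ n" N]
        card_set_plus_ge[OF assms(4,5) finite_elt_set_times[OF assms(2)], of "3 ^ n"]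
        \<open>3 ^ m \<ge> 3\<close> \<open>3 ^ n \<ge> 3\<close> assms(1-5)
      unfolding card_bs_square_two_layers[OF assms(1,2,4)] by (simp add: card_elt_set_times)
  qed
  then show ?thesis
    unfolding card_S by linarith
qed

end
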